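(* Fix time series $s^1,\ldots,s^k$, $s^l\in\mathbb{Q}^{m_l}$, and let $N=\sum_{l=1}^k m_l-2(k-1)$. For each $l$ let $D_l$ be the directed graph with vertex set $V_l=[m_l]\times[N]$ and arc set $A_l$ consisting of all arcs $((i,j),(i+1,j+1))$, $((i,j),(i+1,j))$, $((i,j),(i,j+1))$ whose endpoints lie in $V_l$; let $s_l=(1,1)$ and $T_l=\{(m_l,j): j\in[N]\}$. Let $L_j\le U_j$ ($j\in[N]$) be the mean-value bounds and $M^l_v=\max(|s^l_i-L_j|,|U_j-s^l_i|)$ for $v=(i,j)\in V_l$. Let $\mathcal{V}$ (the NLP relaxation of the vertex-based formulation) be the set of real vectors $(x,y,z,d)$, $x=(x_j)_{j\in[N]}$, $y=(y^l_v)$, $d=(d^l_v)$ for $l\in[k]$, $v\in V_l$, $z=(z_j)_{j\in[N]}$, satisfying: $\sum_{j=1}^N x_j=1$, $0\le x_j\le 1$; $0\le y^l_v\le 1$; $y^l_{s_l}=1$; $y^l_u\le\sum_{(u,v)\in A_l}y^l_v$ for $u\in V_l\setminus T_l$; $y^l_u\le \sum_{(u,v)\in A_l}y^l_v+x_j$ for $u=(m_l,j)\in T_l$; $d^l_v\ge (z_j-s^l_i)^2-(M^l_v)^2(1-y^l_v)$ and $0\le d^l_v\le (M^l_v)^2$ for $v=(i,j)\in V_l$; $z_j\in[L_j,U_j]$. Let $\mathcal{A}$ (the NLP relaxation of the arc-based formulation) be the set of real vectors $(x,f,y,z,d)$ with $f=(f^l_a)_{l\in[k],a\in A_l}$ satisfying: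 $\sum_{j}x_j=1$, $0\le x_j\le1$; $0\le f^l_a\le 1$; for every $l$ and $v\in V_l$, $f^l(\delta^+(v))-f^l(\delta^-(v))$ equals $1$ if $v=s_l$, equals $-x_j$ if $v=(m_l,j)\in T_l$, and equals $0$ otherwise (where $f^l(\delta^{\pm}(v))$ is the sum of $f^l$ over arcs leaving/entering $v$); $y^l_v=f^l(\delta^+(v))+x_j$ if $v=(m_l,j)\in T_l$ and $y^l_v=f^l(\delta^+(v))$ otherwise; and the same constraints on $d$ and $z$ as in $\mathcal{V}$ (namely $d^l_v\ge (z_j-s^l_i)^2-(M^l_v)^2(1-y^l_v)$, $0\le d^l_v\le (M^l_v)^2$, $z_j\in[L_j,U_j]$). Then the projection of $\mathcal{A}$ onto the variables $(x,y,z,d)$ is contained in $\mathcal{V}$.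
   Context: $[m]=\{1,\ldots,m\}$. The bounds $L_j,U_j$ are, in the setting without global warping constraints, $U_j=\max\frac{\sum_{l}\sum_{i\in I_l}s^l_i}{\sum_l|I_l|}$ and $L_j=\min\frac{\sum_{l}\sum_{i\in I_l}s^l_i}{\sum_l|I_l|}$ over all choices of nonempty integer intervals $I_l=\{a_l,\ldots,b_l\}\subseteq[m_l]$, $l\in[k]$ (so they do not depend on $j$). The NLP relaxation of a mixed-integer program is obtained by replacing the binary requirements on the variables $x$, $y$, $f$ by the interval constraints $[0,1]$. *)

theory Defs
  imports Complex_Main
begin

type_synonym vtx = "nat \<times> nat"
type_synonym arc = "vtx \<times> vtx"

text \<open>Time series: s l i is the i-th entry (1-based) of series l, l in {1..k}; m l is its length.\<close>

definition Nlen :: "nat \<Rightarrow> (nat \<Rightarrow> nat) \<Rightarrow> nat" where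
  "Nlen k m = (\<Sum>l=1..k. m l) - 2 * (k - 1)"

definition meanvals :: "nat \<Rightarrow> (nat \<Rightarrow> nat) \<Rightarrow> (nat \<Rightarrow> nat \<Rightarrow> rat) \<Rightarrow> real set" where
  "meanvals k m s = {(\<Sum>l=1..k. \<Sum>i=a l..b l. real_of_rat (s l i)) /
        real (\<Sum>l=1..k. card {a l..b l}) | a b.
        \<forall>l\<in>{1..k}. 1 \<le> a l \<and> a l \<le> b l \<and> b l \<le> m l}"

definition Ubd :: "nat \<Rightarrow> (nat \<Rightarrow> nat) \<Rightarrow> (nat \<Rightarrow> nat \<Rightarrow> rat) \<Rightarrow> real" where
  "Ubd k m s = Max (meanvals k m s)"

definition Lbd :: "nat \<Rightarrow> (nat \<Rightarrow> nat) \<Rightarrow> (nat \<Rightarrow> nat \<Rightarrow> rat) \<Rightarrow> real" where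
  "Lbd k m s = Min (meanvals k m s)"

definition Verts :: "(nat \<Rightarrow> nat) \<Rightarrow> nat \<Rightarrow> nat \<Rightarrow> vtx set" where
  "Verts m N l = {1..m l} \<times> {1..N}"

definition Arcs :: "(nat \<Rightarrow> nat) \<Rightarrow> nat \<Rightarrow> nat \<Rightarrow> arc set" where
  "Arcs m N l = {((i,j),(i',j')). (i,j) \<in> Verts m N l \<and> (i',j') \<in> Verts m N l \<and>
      ((i',j') = (i+1,j+1) \<or> (i',j') = (i+1,j) \<or> (i',j') = (i,j+1))}"

definition src :: vtx where "src = (1,1)"

definition Term :: "(nat \<Rightarrow> nat) \<Rightarrow> nat \<Rightarrow> nat \<Rightarrow> vtx set" where
  "Term m N l = {(m l, j) | j. j \<in> {1..N}}"

definition Mbig :: "nat \<Rightarrow> (nat \<Rightarrow> nat) \<Rightarrow> (nat \<Rightarrow> nat \<Rightarrow> rat) \<Rightarrow> nat \<Rightarrow> vtx \<Rightarrow> real" where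
  "Mbig k m s l v = max \<bar>real_of_rat (s l (fst v)) - Lbd k m s\<bar> \<bar>Ubd k m s - real_of_rat (s l (fst v))\<bar>"

definition dz_constraints ::
  "nat \<Rightarrow> (nat \<Rightarrow> nat) \<Rightarrow> (nat \<Rightarrow> nat \<Rightarrow> rat) \<Rightarrow> (nat \<Rightarrow> vtx \<Rightarrow> real) \<Rightarrow> (nat \<Rightarrow> real)
   \<Rightarrow> (nat \<Rightarrow> vtx \<Rightarrow> real) \<Rightarrow> bool" where
  "dz_constraints k m s y z d \<longleftrightarrow>
     (let N = Nlen k m in
      (\<forall>l\<in>{1..k}. \<forall>v\<in>Verts m N l.
          d l v \<ge> (z (snd v) - real_of_rat (s l (fst v)))\<^sup>2 - (Mbig k m s l v)\<^sup>2 * (1 - y l v)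
        \<and> 0 \<le> d l v \<and> d l v \<le> (Mbig k m s l v)\<^sup>2) \<and>
      (\<forall>j\<in>{1..N}. Lbd k m s \<le> z j \<and> z j \<le> Ubd k m s))"

definition inV ::
  "nat \<Rightarrow> (nat \<Rightarrow> nat) \<Rightarrow> (nat \<Rightarrow> nat \<Rightarrow> rat) \<Rightarrow> (nat \<Rightarrow> real) \<Rightarrow> (nat \<Rightarrow> vtx \<Rightarrow> real)
   \<Rightarrow> (nat \<Rightarrow> real) \<Rightarrow> (nat \<Rightarrow> vtx \<Rightarrow> real) \<Rightarrow> bool" where
  "inV k m s x y z d \<longleftrightarrow>
     (let N = Nlen k m in
      (\<Sum>j=1..N. x j) = 1 \<and> (\<forall>j\<in>{1..N}. 0 \<le> x j \<and> x j \<le> 1) \<and>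
      (\<forall>l\<in>{1..k}.
         (\<forall>v\<in>Verts m N l. 0 \<le> y l v \<and> y l v \<le> 1) \<and>
         y l src = 1 \<and>
         (\<forall>u\<in>Verts m N l - Term m N l.
             y l u \<le> (\<Sum>v\<in>{v. (u,v) \<in> Arcs m N l}. y l v)) \<and>
         (\<forall>j\<in>{1..N}.
             y l (m l, j) \<le> (\<Sum>v\<in>{v. ((m l, j),v) \<in> Arcs m N l}. y l v) + x j)) \<and>
      dz_constraints k m s y z d)"

definition outflow :: "(nat \<Rightarrow> nat) \<Rightarrow> nat \<Rightarrow> nat \<Rightarrow> (nat \<Rightarrow> arc \<Rightarrow> real) \<Rightarrow> vtx \<Rightarrow> real" where
  "outflow m N l f v = (\<Sum>a\<in>{a\<in>Arcs m N l. fst a = v}. f l a)"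

definition inflow :: "(nat \<Rightarrow> nat) \<Rightarrow> nat \<Rightarrow> nat \<Rightarrow> (nat \<Rightarrow> arc \<Rightarrow> real) \<Rightarrow> vtx \<Rightarrow> real" where
  "inflow m N l f v = (\<Sum>a\<in>{a\<in>Arcs m N l. snd a = v}. f l a)"

definition inA ::
  "nat \<Rightarrow> (nat \<Rightarrow> nat) \<Rightarrow> (nat \<Rightarrow> nat \<Rightarrow> rat) \<Rightarrow> (nat \<Rightarrow> real) \<Rightarrow> (nat \<Rightarrow> arc \<Rightarrow> real)
   \<Rightarrow> (nat \<Rightarrow> vtx \<Rightarrow> real) \<Rightarrow> (nat \<Rightarrow> real) \<Rightarrow> (nat \<Rightarrow> vtx \<Rightarrow> real) \<Rightarrow> bool" where
  "inA k m s x f y z d \<longleftrightarrow>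
     (let N = Nlen k m in
      (\<Sum>j=1..N. x j) = 1 \<and> (\<forall>j\<in>{1..N}. 0 \<le> x j \<and> x j \<le> 1) \<and>
      (\<forall>l\<in>{1..k}.
         (\<forall>a\<in>Arcs m N l. 0 \<le> f l a \<and> f l a \<le> 1) \<and>
         (\<forall>v\<in>Verts m N l.
            outflow m N l f v - inflow m N l f v =
              (if v = src then 1 else if v \<in> Term m N l then - x (snd v) else 0)) \<and>
         (\<forall>v\<in>Verts m N l.
            y l v = (if v \<in> Term m N l then outflow m N l f v + x (snd v)
                     else outflow m N l f v))) \<and>
      dz_constraints k m s y z d)"

end

theory Submission
  imports Defs
begin

text \<open>
  In the arc formulation, flow conservation makes \<open>y\<close> equal to the inflow at every vertex other
  than the source, and \<open>y\<close> at the source equals its outflow, which is 1. The vertex constraints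
  then follow from nonnegativity of the flow: the flow leaving \<open>u\<close> is part of the inflow of
  its successors, and the inflow of \<open>v\<close> is part of the flow entering the set of grid points
  that dominate \<open>v\<close> componentwise. That set is closed under arcs, so the flow entering it equals
  its total demand, which is a partial sum of the \<open>x\<^sub>j\<close> and hence at most 1.
\<close>

lemma sum_fiberwise_restrict:
  assumes "finite A" "finite P"
  shows "(\<Sum>w\<in>P. \<Sum>a\<in>{a\<in>A. g a = w}. f a) = (\<Sum>a\<in>{a\<in>A. g a \<in> P}. f a)"
proof -
  have "(\<Sum>w\<in>P. \<Sum>a\<in>{a\<in>A. g a = w}. f a)
      = (\<Sum>w\<in>P. \<Sum>a\<in>{a. a \<in> {a\<in>A. g a \<in> P} \<and> g a = w}. f a)"
    by (rule sum.cong) (auto intro!: sum.cong)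
  also have "\<dots> = (\<Sum>a\<in>{a\<in>A. g a \<in> P}. f a)"
    by (rule sum.group) (use assms in auto)
  finally show ?thesis .
qed

lemma net_inflow_closed_set:
  fixes f :: "'a \<times> 'a \<Rightarrow> 'b::ab_group_add"
  assumes "finite A" "finite P" and closed: "\<forall>a\<in>A. fst a \<in> P \<longrightarrow> snd a \<in> P"
  shows "(\<Sum>w\<in>P. (\<Sum>a\<in>{a\<in>A. snd a = w}. f a) - (\<Sum>a\<in>{a\<in>A. fst a = w}. f a))
         = (\<Sum>a\<in>{a\<in>A. snd a \<in> P \<and> fst a \<notin> P}. f a)"
proof -
  have split: "{a\<in>A. snd a \<in> P} = {a\<in>A. fst a \<in> P} \<union> {a\<in>A. snd a \<in> P \<and> fst a \<notin> P}"
    using closed by auto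
  have "(\<Sum>a\<in>{a\<in>A. snd a \<in> P}. f a)
      = (\<Sum>a\<in>{a\<in>A. fst a \<in> P}. f a) + (\<Sum>a\<in>{a\<in>A. snd a \<in> P \<and> fst a \<notin> P}. f a)"
    unfolding split by (rule sum.union_disjoint) (use assms(1) in auto)
  then show ?thesis
    using sum_fiberwise_restrict[OF assms(1,2), where g=snd and f=f] sum_fiberwise_restrict[OF assms(1,2), where g=fst and f=f]
    by (simp add: sum_subtractf)
qed

lemma inflow_le_net_inflow_closed_set:
  fixes f :: "'a \<times> 'a \<Rightarrow> real"
  assumes "finite A" "finite P" and closed: "\<forall>a\<in>A. fst a \<in> P \<longrightarrow> snd a \<in> P"
    and "v \<in> P" and entering: "\<forall>a\<in>A. snd a = v \<longrightarrow> fst a \<notin> P"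
    and nonneg: "\<forall>a\<in>A. 0 \<le> f a"
  shows "(\<Sum>a\<in>{a\<in>A. snd a = v}. f a)
         \<le> (\<Sum>w\<in>P. (\<Sum>a\<in>{a\<in>A. snd a = w}. f a) - (\<Sum>a\<in>{a\<in>A. fst a = w}. f a))"
proof -
  have "(\<Sum>a\<in>{a\<in>A. snd a = v}. f a) \<le> (\<Sum>a\<in>{a\<in>A. snd a \<in> P \<and> fst a \<notin> P}. f a)"
    by (rule sum_mono2) (use assms in auto)
  then show ?thesis
    using net_inflow_closed_set[OF assms(1-3), of f] by simp
qed

lemma outflow_le_sum_successor_inflow:
  fixes f :: "'a \<times> 'a \<Rightarrow> real"
  assumes "finite A" and nonneg: "\<forall>a\<in>A. 0 \<le> f a"
  shows "(\<Sum>a\<in>{a\<in>A. fst a = u}. f a) \<le> (\<Sum>v\<in>{v. (u,v) \<in> A}. \<Sum>a\<in>{a\<in>A. snd a = v}. f a)"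
proof -
  have "(\<Sum>a\<in>{a\<in>A. fst a = u}. f a) = (\<Sum>a\<in>Pair u ` {v. (u,v) \<in> A}. f a)"
    by (rule sum.cong) auto
  also have "\<dots> = (\<Sum>v\<in>{v. (u,v) \<in> A}. f (u,v))"
    by (rule sum.reindex_cong[where l="Pair u"]) (auto simp: inj_on_def)
  also have "\<dots> \<le> (\<Sum>v\<in>{v. (u,v) \<in> A}. \<Sum>a\<in>{a\<in>A. snd a = v}. f a)"
    by (rule sum_mono, rule member_le_sum) (use assms in auto)
  finally show ?thesis .
qed

lemma finite_Verts: "finite (Verts m N l)"
  unfolding Verts_def by simp

lemma Arcs_subset: "Arcs m N l \<subseteq> Verts m N l \<times> Verts m N l"
  unfolding Arcs_def by auto

lemma finite_Arcs: "finite (Arcs m N l)"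
  using finite_subset[OF Arcs_subset] finite_Verts by blast

lemma Arcs_monotone: "((i,j),(i',j')) \<in> Arcs m N l \<Longrightarrow> i \<le> i' \<and> j \<le> j' \<and> (i,j) \<noteq> (i',j')"
  unfolding Arcs_def by auto

lemma src_not_head: "a \<in> Arcs m N l \<Longrightarrow> snd a \<noteq> src"
  unfolding Arcs_def src_def Verts_def by auto

definition dominating :: "(nat \<Rightarrow> nat) \<Rightarrow> nat \<Rightarrow> nat \<Rightarrow> vtx \<Rightarrow> vtx set" where
  "dominating m N l v = {w\<in>Verts m N l. fst v \<le> fst w \<and> snd v \<le> snd w}"

lemma dominating_closed:
  "\<forall>a\<in>Arcs m N l. fst a \<in> dominating m N l v \<longrightarrow> snd a \<in> dominating m N l v"
  using Arcs_subset by (fastforce simp: dominating_def dest: Arcs_monotone)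

lemma tail_of_arc_into_notin_dominating:
  "\<forall>a\<in>Arcs m N l. snd a = v \<longrightarrow> fst a \<notin> dominating m N l v"
  by (fastforce simp: dominating_def dest: Arcs_monotone)

locale arc_flow_layer =
  fixes m :: "nat \<Rightarrow> nat" and N l :: nat and x :: "nat \<Rightarrow> real"
    and f :: "nat \<Rightarrow> arc \<Rightarrow> real" and y :: "nat \<Rightarrow> vtx \<Rightarrow> real"
  assumes length_ge_2: "m l \<ge> 2"
    and x_sum: "(\<Sum>j=1..N. x j) = 1"
    and x_nonneg: "\<forall>j\<in>{1..N}. 0 \<le> x j"
    and f_nonneg: "\<forall>a\<in>Arcs m N l. 0 \<le> f l a"
    and conservation: "\<forall>v\<in>Verts m N l.
            outflow m N l f v - inflow m N l f v =
              (if v = src then 1 else if v \<in> Term m N l then - x (snd v) else 0)"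
    and y_eq: "\<forall>v\<in>Verts m N l.
            y l v = (if v \<in> Term m N l then outflow m N l f v + x (snd v)
                     else outflow m N l f v)"
begin

lemma src_in_Verts: "src \<in> Verts m N l"
proof -
  have "N \<ge> 1" using x_sum by (cases N) auto
  then show ?thesis using length_ge_2 by (simp add: src_def Verts_def)
qed

lemma src_notin_Term: "src \<notin> Term m N l"
  using length_ge_2 by (auto simp: src_def Term_def)

lemma y_src: "y l src = 1"
proof -
  have "inflow m N l f src = 0"
    unfolding inflow_def using src_not_head by (intro sum.neutral) blast
  then show ?thesis
    using conservation y_eq src_in_Verts src_notin_Term by auto
qed

lemma y_eq_inflow: "v \<in> Verts m N l \<Longrightarrow> v \<noteq> src \<Longrightarrow> y l v = inflow m N l f v"
  using conservation y_eq by (cases "v \<in> Term m N l") force+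

lemma inflow_nonneg: "0 \<le> inflow m N l f v"
  unfolding inflow_def using f_nonneg by (intro sum_nonneg) auto

lemma demand_le_1:
  assumes "P \<subseteq> Verts m N l"
  shows "(\<Sum>w\<in>P. if w \<in> Term m N l then x (snd w) else 0) \<le> 1"
proof -
  have "finite P" using assms finite_Verts finite_subset by blast
  then have "(\<Sum>w\<in>P. if w \<in> Term m N l then x (snd w) else 0) = (\<Sum>w\<in>P \<inter> Term m N l. x (snd w))"
    by (simp add: sum.inter_restrict)
  also have "\<dots> = (\<Sum>j\<in>snd ` (P \<inter> Term m N l). x j)"
    by (subst sum.reindex) (auto simp: inj_on_def Term_def)
  also have "\<dots> \<le> (\<Sum>j=1..N. x j)"
    by (rule sum_mono2) (use x_nonneg in \<open>auto simp: Term_def\<close>)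
  finally show ?thesis using x_sum by simp
qed

lemma inflow_le_1:
  assumes v: "v \<in> Verts m N l" "v \<noteq> src"
  shows "inflow m N l f v \<le> 1"
proof -
  let ?P = "dominating m N l v"
  have "inflow m N l f v \<le> (\<Sum>w\<in>?P. inflow m N l f w - outflow m N l f w)"
    unfolding inflow_def outflow_def
    using inflow_le_net_inflow_closed_set[OF finite_Arcs _ dominating_closed _
        tail_of_arc_into_notin_dominating f_nonneg] finite_Verts v
    by (simp add: dominating_def)
  also have "\<dots> = (\<Sum>w\<in>?P. if w \<in> Term m N l then x (snd w) else 0)"
  proof (rule sum.cong)
    fix w assume w: "w \<in> ?P"
    have "w \<in> Verts m N l" "w \<noteq> src"
      using w v by (auto simp: dominating_def src_def Verts_def)
    then show "inflow m N l f w - outflow m N l f w = (if w \<in> Term m N l then x (snd w) else 0)"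
      using conservation by force
  qed simp
  also have "\<dots> \<le> 1"
    by (rule demand_le_1) (auto simp: dominating_def)
  finally show ?thesis .
qed

lemma y_nonneg: "v \<in> Verts m N l \<Longrightarrow> 0 \<le> y l v"
  using y_src y_eq_inflow inflow_nonneg by (cases "v = src") auto

lemma y_le_1: "v \<in> Verts m N l \<Longrightarrow> y l v \<le> 1"
  using y_src y_eq_inflow inflow_le_1 by (cases "v = src") auto

lemma outflow_le_successor_y:
  "outflow m N l f u \<le> (\<Sum>v\<in>{v. (u,v) \<in> Arcs m N l}. y l v)"
proof -
  have "outflow m N l f u \<le> (\<Sum>v\<in>{v. (u,v) \<in> Arcs m N l}. inflow m N l f v)"
    unfolding outflow_def inflow_def
    by (rule outflow_le_sum_successor_inflow[OF finite_Arcs f_nonneg])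
  also have "\<dots> = (\<Sum>v\<in>{v. (u,v) \<in> Arcs m N l}. y l v)"
  proof (rule sum.cong)
    fix v assume "v \<in> {v. (u,v) \<in> Arcs m N l}"
    then have "v \<in> Verts m N l" "v \<noteq> src"
      using Arcs_subset src_not_head[of "(u,v)"] by auto
    then show "inflow m N l f v = y l v" by (simp add: y_eq_inflow)
  qed simp
  finally show ?thesis .
qed

lemma vertex_constraints:
  "(\<forall>v\<in>Verts m N l. 0 \<le> y l v \<and> y l v \<le> 1) \<and>
   y l src = 1 \<and>
   (\<forall>u\<in>Verts m N l - Term m N l. y l u \<le> (\<Sum>v\<in>{v. (u,v) \<in> Arcs m N l}. y l v)) \<and>
   (\<forall>j\<in>{1..N}. y l (m l, j) \<le> (\<Sum>v\<in>{v. ((m l, j),v) \<in> Arcs m N l}. y l v) + x j)"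
proof (intro conjI ballI y_nonneg y_le_1 y_src)
  fix u assume "u \<in> Verts m N l - Term m N l"
  then show "y l u \<le> (\<Sum>v\<in>{v. (u,v) \<in> Arcs m N l}. y l v)"
    using y_eq outflow_le_successor_y[of u] by auto
next
  fix j assume "j \<in> {1..N}"
  then have "(m l, j) \<in> Verts m N l" "(m l, j) \<in> Term m N l"
    using length_ge_2 by (auto simp: Verts_def Term_def)
  then show "y l (m l, j) \<le> (\<Sum>v\<in>{v. ((m l, j),v) \<in> Arcs m N l}. y l v) + x j"
    using y_eq outflow_le_successor_y[of "(m l, j)"] by auto
qed

end

theorem mainTheorem2:
  fixes k :: nat and m :: "nat \<Rightarrow> nat" and s :: "nat \<Rightarrow> nat \<Rightarrow> rat"
    and x :: "nat \<Rightarrow> real" and f :: "nat \<Rightarrow> arc \<Rightarrow> real"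
    and y d :: "nat \<Rightarrow> vtx \<Rightarrow> real" and z :: "nat \<Rightarrow> real"
  assumes "k \<ge> 1" and "\<forall>l\<in>{1..k}. m l \<ge> 2"
    and "inA k m s x f y z d"
  shows "inV k m s x y z d"
proof -
  define N where "N = Nlen k m"
  have x: "(\<Sum>j=1..N. x j) = 1" "\<forall>j\<in>{1..N}. 0 \<le> x j \<and> x j \<le> 1"
    and dz: "dz_constraints k m s y z d"
    using assms(3) unfolding inA_def N_def Let_def by auto
  have "arc_flow_layer m N l x f y" if "l \<in> {1..k}" for l
    using assms(2,3) that unfolding arc_flow_layer_def inA_def N_def Let_def by auto
  then show ?thesis
    using arc_flow_layer.vertex_constraints x dz unfolding inV_def Let_def N_def[symmetric] by blast
qed

end
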